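(* For every positive integer $m$ and all complex numbers $\alpha \neq 0$ and $x$, $$\sum_{k=1}^m \binom{m}{k} k^\alpha x^k = \sum_{j=1}^m \binom{m}{j} j!\, S(\alpha, j)\, x^j (1+x)^{m-j}.$$
   Context: For a complex number $\alpha \neq 0$ and a positive integer $k$, the Stirling function of the second kind is $$S(\alpha, k) = \frac{1}{k!} \sum_{j=1}^k (-1)^{k-j} \binom{k}{j} j^\alpha,$$ where for a positive integer $j$, $j^\alpha = e^{\alpha \ln j}$ with $\ln j$ the real logarithm. Here $(1+x)^0 = 1$ for all $x$. *)

theory Defs
  imports Complex_Main
begin

definition natpow :: "nat \<Rightarrow> complex \<Rightarrow> complex" where
  "natpow j \<alpha> = exp (\<alpha> * complex_of_real (ln (real j)))"

definition stirling_fun :: "complex \<Rightarrow> nat \<Rightarrow> complex" where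
  "stirling_fun \<alpha> k = (1 / of_nat (fact k)) *
     (\<Sum>j=1..k. (-1) ^ (k - j) * of_nat (k choose j) * natpow j \<alpha>)"

end

theory Submission
  imports Defs
begin

(* Write  D a j = \<Sum>i=0..j. (-1)^(j-i) (j choose i) a i  for the j-th forward
   difference at 0 of a sequence a.  For any sequence a in a commutative ring,
     \<Sum>j=0..m. (m choose j) (D a j) x^j (1+x)^(m-j)  =  \<Sum>i=0..m. (m choose i) (a i) x^i,
   which follows by exchanging the two sums: the coefficient of a i on the left is
     \<Sum>j=i..m. (m choose j)(j choose i)(-1)^(j-i) x^j (1+x)^(m-j)
       = (m choose i) x^i ((-x) + (1+x))^(m-i) = (m choose i) x^i
   by  (m choose j)(j choose i) = (m choose i)((m-i) choose (j-i))  and the binomial theorem.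
   By definition  j! S(\<alpha>, j)  is exactly  D a j  for the sequence  a 0 = 0, a k = k^\<alpha>,
   so the theorem is this identity with the (vanishing) index-0 terms removed. *)

definition forward_difference :: "(nat \<Rightarrow> 'a::comm_ring_1) \<Rightarrow> nat \<Rightarrow> 'a" where
  "forward_difference a j = (\<Sum>i=0..j. (-1) ^ (j - i) * of_nat (j choose i) * a i)"

(* The coefficient of a i after exchanging sums: a binomial expansion of ((-x) + (1+x))^(m-i). *)
lemma binomial_coefficient_collapse:
  fixes x :: "'a::comm_ring_1"
  assumes "i \<le> m"
  shows "(\<Sum>j=i..m. of_nat (m choose j) * of_nat (j choose i) * (-1) ^ (j - i) * x ^ j * (1 + x) ^ (m - j))
         = of_nat (m choose i) * x ^ i"
proof -
  define n where "n = m - i"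
  have "(\<Sum>j=i..m. of_nat (m choose j) * of_nat (j choose i) * (-1) ^ (j - i) * x ^ j * (1 + x) ^ (m - j))
      = (\<Sum>l=0..n. of_nat (m choose (i + l)) * of_nat ((i + l) choose i) * (-1) ^ l * x ^ (i + l) * (1 + x) ^ (n - l))"
    unfolding n_def
    by (rule sum.reindex_bij_witness[where i="\<lambda>l. i + l" and j="\<lambda>j. j - i"]) (use assms in auto)
  also have "\<dots> = (\<Sum>l=0..n. of_nat (m choose i) * x ^ i * (of_nat (n choose l) * (-x) ^ l * (1 + x) ^ (n - l)))"
  proof (rule sum.cong[OF refl])
    fix l assume "l \<in> {0..n}"
    then have "(m choose (i + l)) * ((i + l) choose i) = (m choose i) * (n choose l)"
      using assms choose_mult[of i "i + l" m] by (simp add: n_def)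
    then have binomials: "(of_nat (m choose (i + l)) * of_nat ((i + l) choose i) :: 'a)
        = of_nat (m choose i) * of_nat (n choose l)"
      by (metis of_nat_mult)
    have powers: "(-1) ^ l * x ^ (i + l) = x ^ i * (-x) ^ l"
      by (simp only: power_add power_minus[of x l] ac_simps)
    have "of_nat (m choose (i + l)) * of_nat ((i + l) choose i) * (-1) ^ l * x ^ (i + l) * (1 + x) ^ (n - l)
        = (of_nat (m choose (i + l)) * of_nat ((i + l) choose i)) * ((-1) ^ l * x ^ (i + l)) * (1 + x) ^ (n - l)"
      by (simp only: mult.assoc)
    also have "\<dots> = (of_nat (m choose i) * of_nat (n choose l)) * (x ^ i * (-x) ^ l) * (1 + x) ^ (n - l)"
      by (simp only: binomials powers)
    finally show "of_nat (m choose (i + l)) * of_nat ((i + l) choose i) * (-1) ^ l * x ^ (i + l) * (1 + x) ^ (n - l)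
        = of_nat (m choose i) * x ^ i * (of_nat (n choose l) * (-x) ^ l * (1 + x) ^ (n - l))"
      by (simp only: ac_simps)
  qed
  also have "\<dots> = of_nat (m choose i) * x ^ i * ((-x) + (1 + x)) ^ n"
    by (simp only: binomial_ring[of "-x" "1 + x" n] sum_distrib_left atLeast0AtMost)
  also have "\<dots> = of_nat (m choose i) * x ^ i"
    by simp
  finally show ?thesis .
qed

lemma forward_difference_expansion:
  fixes x :: "'a::comm_ring_1" and a :: "nat \<Rightarrow> 'a"
  shows "(\<Sum>j=0..m. of_nat (m choose j) * forward_difference a j * x ^ j * (1 + x) ^ (m - j))
       = (\<Sum>i=0..m. of_nat (m choose i) * a i * x ^ i)"
proof -
  define c where "c i j = of_nat (m choose j) * of_nat (j choose i) * (-1) ^ (j - i) * x ^ j * (1 + x) ^ (m - j)"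
    for i j :: nat
  have "(\<Sum>j=0..m. of_nat (m choose j) * forward_difference a j * x ^ j * (1 + x) ^ (m - j))
      = (\<Sum>j\<in>{0..m}. \<Sum>i\<in>{i. i \<in> {0..m} \<and> i \<le> j}. a i * c i j)"
  proof (rule sum.cong[OF refl])
    fix j assume "j \<in> {0..m}"
    then have "{i. i \<in> {0..m} \<and> i \<le> j} = {0..j}"
      by auto
    then show "of_nat (m choose j) * forward_difference a j * x ^ j * (1 + x) ^ (m - j)
        = (\<Sum>i\<in>{i. i \<in> {0..m} \<and> i \<le> j}. a i * c i j)"
      by (simp add: forward_difference_def c_def sum_distrib_left sum_distrib_right algebra_simps)
  qed
  also have "\<dots> = (\<Sum>i\<in>{0..m}. \<Sum>j\<in>{j. j \<in> {0..m} \<and> i \<le> j}. a i * c i j)"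
    by (rule sum.swap_restrict[symmetric]) simp_all
  also have "\<dots> = (\<Sum>i=0..m. of_nat (m choose i) * a i * x ^ i)"
  proof (rule sum.cong[OF refl])
    fix i assume "i \<in> {0..m}"
    moreover have "{j. j \<in> {0..m} \<and> i \<le> j} = {i..m}"
      by auto
    ultimately show "(\<Sum>j\<in>{j. j \<in> {0..m} \<and> i \<le> j}. a i * c i j) = of_nat (m choose i) * a i * x ^ i"
      using binomial_coefficient_collapse[of i m x]
      by (simp add: c_def sum_distrib_left[symmetric] algebra_simps)
  qed
  finally show ?thesis .
qed

lemma fact_stirling_fun:
  "of_nat (fact j) * stirling_fun \<alpha> j = forward_difference (\<lambda>k. if k = 0 then 0 else natpow k \<alpha>) j"
  by (simp add: stirling_fun_def forward_difference_def sum.atLeast_Suc_atMost)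

theorem proposition2:
  fixes m :: nat and \<alpha> x :: complex
  assumes "m \<ge> 1" and "\<alpha> \<noteq> 0"
  shows "(\<Sum>k=1..m. of_nat (m choose k) * natpow k \<alpha> * x ^ k) =
         (\<Sum>j=1..m. of_nat (m choose j) * of_nat (fact j) * stirling_fun \<alpha> j
                      * x ^ j * (1 + x) ^ (m - j))"
proof -
  define a where "a k = (if k = 0 then 0 else natpow k \<alpha>)" for k
  have "(\<Sum>k=1..m. of_nat (m choose k) * natpow k \<alpha> * x ^ k) = (\<Sum>k=0..m. of_nat (m choose k) * a k * x ^ k)"
    by (simp add: a_def sum.atLeast_Suc_atMost)
  also have "\<dots> = (\<Sum>j=0..m. of_nat (m choose j) * forward_difference a j * x ^ j * (1 + x) ^ (m - j))"
    by (rule forward_difference_expansion[symmetric])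
  also have "\<dots> = (\<Sum>j=1..m. of_nat (m choose j) * forward_difference a j * x ^ j * (1 + x) ^ (m - j))"
    by (simp add: a_def forward_difference_def sum.atLeast_Suc_atMost)
  also have "\<dots> = (\<Sum>j=1..m. of_nat (m choose j) * of_nat (fact j) * stirling_fun \<alpha> j * x ^ j * (1 + x) ^ (m - j))"
    by (simp only: fact_stirling_fun a_def[abs_def] mult.assoc)
  finally show ?thesis .
qed

end
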